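(* Let $p\geq 1$. For any $y^1,y^2\in D(\mathbb{R}^+,\mathbb{R})$ and any $T\in\mathbb{R}^+$, \[ v_p\Big(\sup_{s\leq\cdot}y^1_s-\sup_{s\leq\cdot}y^2_s\Big)_T\leq v_p(y^1-y^2)_T . \]
   Context: $\mathbb{R}^+=[0,\infty)$. $D(\mathbb{R}^+,\mathbb{R}^m)$ denotes the space of càdlàg functions $x:\mathbb{R}^+\to\mathbb{R}^m$ (right-continuous with left limits). For $x\in D(\mathbb{R}^+,\mathbb{R}^m)$ and $a<b$, $v_p(x)_{[a,b]}=\sup_\pi\sum_{i=1}^n|x_{t_i}-x_{t_{i-1}}|^p$, the supremum being over all subdivisions $\pi=\{a=t_0<\dots<t_n=b\}$, with $|\cdot|$ the Euclidean norm; $v_p(x)_T=v_p(x)_{[0,T]}$. The function $\sup_{s\leq\cdot}y_s$ is $t\mapsto\sup_{s\leq t}y_s$. *)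

theory Defs
  imports "HOL-Analysis.Analysis"
begin

text \<open>Real-valued cadlag functions on the half-line [0,\<infinity>): right-continuous at every
  t \<ge> 0 and having a left limit at every t > 0. Values at negative arguments are irrelevant.\<close>
definition cadlag :: "(real \<Rightarrow> real) \<Rightarrow> bool" where
  "cadlag x \<longleftrightarrow> (\<forall>t\<ge>0. continuous (at_right t) x) \<and>
                  (\<forall>t>0. \<exists>l. (x \<longlongrightarrow> l) (at_left t))"

definition subdivisions :: "real \<Rightarrow> real \<Rightarrow> (nat \<times> (nat \<Rightarrow> real)) set" where
  "subdivisions a b = {(n, t). t 0 = a \<and> t n = b \<and> (\<forall>i<n. t i < t (Suc i))}"

definition pvar :: "real \<Rightarrow> (real \<Rightarrow> real) \<Rightarrow> real \<Rightarrow> real \<Rightarrow> ereal" where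
  "pvar p x a b = (SUP (n, t) \<in> subdivisions a b.
       ereal (\<Sum>i<n. \<bar>x (t (Suc i)) - x (t i)\<bar> powr p))"

definition runsup :: "(real \<Rightarrow> real) \<Rightarrow> real \<Rightarrow> real" where
  "runsup y t = Sup (y ` {0..t})"

end

theory Submission
  imports Defs
begin

text \<open>
  Write \<open>z\<close> for the difference of the running suprema and \<open>x = y1 - y2\<close>. If \<open>z\<close> increases
  from \<open>a\<close> to \<open>b\<close>, the running supremum of \<open>y1\<close> must have grown on \<open>(a, b]\<close>, hence is
  nearly attained at some \<open>u \<in> (a, b]\<close>, and there \<open>z b \<le> x u + \<epsilon>\<close>; symmetrically for
  decreases. Since \<open>p \<ge> 1\<close>, merging consecutive increments of equal sign only enlarges a
  sum of \<open>p\<close>-th powers, so every partition sum of \<open>z\<close> is dominated by one along a chain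
  whose increments alternate in sign. Choosing such a point \<open>u\<close> for each step of that chain
  bounds every increment of \<open>z\<close> by the corresponding increment of \<open>x\<close> along the \<open>u\<close>'s
  plus \<open>2\<epsilon>\<close>, and \<open>\<epsilon> \<rightarrow> 0\<close> is handled by the uniform continuity of \<open>r \<mapsto> r powr p\<close> on
  bounded sets.
\<close>

lemma powr_add_ge_add_powr:
  fixes a b p :: real
  assumes "p \<ge> 1" "a \<ge> 0" "b \<ge> 0"
  shows "a powr p + b powr p \<le> (a + b) powr p"
proof (cases "a + b = 0")
  case True
  then have "a = 0" "b = 0" using assms by simp_all
  then show ?thesis by simp
next
  case False
  then have ab: "a + b > 0" using assms by simp
  have le: "c powr p \<le> c * (a + b) powr (p - 1)" if "0 \<le> c" "c \<le> a + b" for c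
  proof (cases "c = 0")
    case False
    then have "c powr p = c * c powr (p - 1)" using that by (simp add: powr_mult_base)
    also have "\<dots> \<le> c * (a + b) powr (p - 1)"
      using that assms(1) by (intro mult_left_mono powr_mono2) auto
    finally show ?thesis .
  qed simp
  have "a powr p + b powr p \<le> a * (a + b) powr (p - 1) + b * (a + b) powr (p - 1)"
    using assms by (intro add_mono le) auto
  also have "\<dots> = (a + b) * (a + b) powr (p - 1)" by (simp add: distrib_right)
  also have "\<dots> = (a + b) powr p" using ab by (simp add: powr_mult_base)
  finally show ?thesis .
qed

lemma abs_powr_add_ge_add_abs_powr:
  fixes a b p :: real
  assumes "p \<ge> 1" "a * b \<ge> 0"
  shows "\<bar>a\<bar> powr p + \<bar>b\<bar> powr p \<le> \<bar>a + b\<bar> powr p"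
proof -
  have "\<bar>a + b\<bar> = \<bar>a\<bar> + \<bar>b\<bar>"
    using assms(2) by (auto simp: abs_if zero_le_mult_iff)
  then show ?thesis using powr_add_ge_add_powr[OF assms(1)] by simp
qed

definition pvar_sum :: "real \<Rightarrow> (real \<Rightarrow> real) \<Rightarrow> nat \<Rightarrow> (nat \<Rightarrow> real) \<Rightarrow> real" where
  "pvar_sum p f m s = (\<Sum>j<m. \<bar>f (s (Suc j)) - f (s j)\<bar> powr p)"

lemma pvar_sum_Suc:
  "pvar_sum p f (Suc m) s = pvar_sum p f m s + \<bar>f (s (Suc m)) - f (s m)\<bar> powr p"
  by (simp add: pvar_sum_def)

lemma pvar_sum_upd_beyond:
  assumes "m < k"
  shows "pvar_sum p f m (s(k := v)) = pvar_sum p f m s"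
  unfolding pvar_sum_def using assms by (intro sum.cong) auto

lemma pvar_sum_nonneg: "pvar_sum p f m s \<ge> 0"
  unfolding pvar_sum_def by (intro sum_nonneg) auto

lemma pvar_eq_SUP_pvar_sum:
  "pvar p f a b = (SUP (n, t) \<in> subdivisions a b. ereal (pvar_sum p f n t))"
  by (simp add: pvar_def pvar_sum_def)

lemma pvar_sum_le_pvar:
  assumes "s 0 = a" "\<forall>j<m. s j < s (Suc j)" "s m \<le> b"
  shows "ereal (pvar_sum p f m s) \<le> pvar p f a b"
proof (cases "s m = b")
  case True
  then have "(m, s) \<in> subdivisions a b" using assms unfolding subdivisions_def by auto
  then show ?thesis unfolding pvar_eq_SUP_pvar_sum by (rule SUP_upper2) simp
next
  case False
  then have "(Suc m, s(Suc m := b)) \<in> subdivisions a b"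
    using assms unfolding subdivisions_def by (auto simp: less_Suc_eq)
  moreover have "pvar_sum p f m s \<le> pvar_sum p f (Suc m) (s(Suc m := b))"
    by (simp add: pvar_sum_Suc pvar_sum_upd_beyond)
  ultimately show ?thesis unfolding pvar_eq_SUP_pvar_sum
    by (intro SUP_upper2[of "(Suc m, s(Suc m := b))"]) auto
qed

definition alternating :: "(real \<Rightarrow> real) \<Rightarrow> nat \<Rightarrow> (nat \<Rightarrow> real) \<Rightarrow> bool" where
  "alternating f m s \<longleftrightarrow> (\<forall>j<m. f (s (Suc j)) \<noteq> f (s j)) \<and>
     (\<forall>j. Suc j < m \<longrightarrow> (f (s (Suc j)) - f (s j)) * (f (s (Suc (Suc j))) - f (s (Suc j))) < 0)"

lemma alternating_extend:
  assumes alt: "alternating f m s" and ne: "f v \<noteq> f (s m)"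
    and turn: "m > 0 \<Longrightarrow> (f (s m) - f (s (m - 1))) * (f v - f (s m)) < 0"
  shows "alternating f (Suc m) (s(Suc m := v))"
  unfolding alternating_def
proof (intro conjI allI impI)
  fix j assume "j < Suc m"
  then show "f ((s(Suc m := v)) (Suc j)) \<noteq> f ((s(Suc m := v)) j)"
    using alt ne unfolding alternating_def by (cases "j = m") auto
next
  fix j assume j: "Suc j < Suc m"
  show "(f ((s(Suc m := v)) (Suc j)) - f ((s(Suc m := v)) j)) *
        (f ((s(Suc m := v)) (Suc (Suc j))) - f ((s(Suc m := v)) (Suc j))) < 0"
  proof (cases "Suc j = m")
    case True
    then show ?thesis using turn by auto
  next
    case False
    then show ?thesis using alt j unfolding alternating_def by auto
  qed
qed

lemma alternating_prolong_last:
  assumes alt: "alternating f (Suc k) s"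
    and same: "(f (s (Suc k)) - f (s k)) * (f v - f (s (Suc k))) > 0"
  shows "alternating f (Suc k) (s(Suc k := v))"
proof -
  have same_sign: "(f (s (Suc k)) - f (s k)) * (f v - f (s k)) > 0"
    using same by (auto simp: zero_less_mult_iff)
  show ?thesis unfolding alternating_def
  proof (intro conjI allI impI)
    fix j assume "j < Suc k"
    then show "f ((s(Suc k := v)) (Suc j)) \<noteq> f ((s(Suc k := v)) j)"
      using alt same_sign unfolding alternating_def by (cases "j = k") auto
  next
    fix j assume j: "Suc j < Suc k"
    have old: "(f (s (Suc j)) - f (s j)) * (f (s (Suc (Suc j))) - f (s (Suc j))) < 0"
      using alt j unfolding alternating_def by auto
    show "(f ((s(Suc k := v)) (Suc j)) - f ((s(Suc k := v)) j)) *
          (f ((s(Suc k := v)) (Suc (Suc j))) - f ((s(Suc k := v)) (Suc j))) < 0"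
    proof (cases "Suc j = k")
      case True
      then show ?thesis using old same_sign by (auto simp: mult_less_0_iff zero_less_mult_iff)
    next
      case False
      then show ?thesis using old j by auto
    qed
  qed
qed

lemma alternating_subchain:
  fixes f :: "real \<Rightarrow> real" and t :: "nat \<Rightarrow> real"
  assumes p: "p \<ge> 1" and t: "\<forall>i<n. t i < t (Suc i)"
  shows "\<exists>m s. m \<le> n \<and> s 0 = t 0 \<and> (\<forall>j<m. s j < s (Suc j)) \<and> s m \<le> t n \<and>
    f (s m) = f (t n) \<and> alternating f m s \<and> pvar_sum p f n t \<le> pvar_sum p f m s"
  using t
proof (induction n)
  case 0
  show ?case by (rule exI[of _ 0], rule exI[of _ t]) (simp add: alternating_def pvar_sum_def)
next
  case (Suc n)
  then obtain m s where IH: "m \<le> n" "s 0 = t 0" "\<forall>j<m. s j < s (Suc j)" "s m \<le> t n"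
      "f (s m) = f (t n)" "alternating f m s" "pvar_sum p f n t \<le> pvar_sum p f m s"
    by auto
  define d where "d = f (t (Suc n)) - f (t n)"
  have tn: "t n < t (Suc n)" using Suc.prems by simp
  have sum_t: "pvar_sum p f (Suc n) t = pvar_sum p f n t + \<bar>d\<bar> powr p"
    by (simp add: pvar_sum_Suc d_def)
  consider "d = 0"
    | k where "m = Suc k" "(f (s m) - f (s k)) * d > 0"
    | "d \<noteq> 0" "m > 0 \<Longrightarrow> (f (s m) - f (s (m - 1))) * d < 0"
  proof (cases "d = 0 \<or> m = 0")
    case False
    then obtain k where k: "m = Suc k" "d \<noteq> 0" by (cases m) auto
    then have "(f (s m) - f (s k)) * d \<noteq> 0" using IH(6) by (simp add: alternating_def)
    moreover have "m - 1 = k" using k by simp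
    ultimately show ?thesis using that(2)[OF k(1)] that(3)[OF k(2)] by (metis linorder_neq_iff)
  qed (use that in auto)
  then show ?case
  proof cases
    case 1
    then show ?thesis using IH tn sum_t d_def by (intro exI[of _ m] exI[of _ s]) auto
  next
    case (2 k)
    define s' where "s' = s(Suc k := t (Suc n))"
    have "f (s m) - f (s k) + d = f (s' m) - f (s' k)"
      using IH(5) 2(1) by (simp add: s'_def d_def)
    then have "\<bar>f (s m) - f (s k)\<bar> powr p + \<bar>d\<bar> powr p \<le> \<bar>f (s' m) - f (s' k)\<bar> powr p"
      using abs_powr_add_ge_add_abs_powr[OF p, of "f (s m) - f (s k)" d] 2(2) by simp
    then have "pvar_sum p f (Suc n) t \<le> pvar_sum p f m s'"
      using IH(7) 2 sum_t by (simp add: s'_def pvar_sum_Suc pvar_sum_upd_beyond)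
    moreover have "\<forall>j<m. s' j < s' (Suc j)"
      using IH(3,4) tn 2 by (auto simp: s'_def less_Suc_eq)
    moreover have "alternating f m s'"
      using alternating_prolong_last[of f k s "t (Suc n)"] IH(5,6) 2
      by (simp add: s'_def d_def)
    moreover have "s' 0 = t 0" "s' m = t (Suc n)" using IH(2) 2(1) by (simp_all add: s'_def)
    ultimately show ?thesis using IH(1) by (intro exI[of _ m] exI[of _ s']) auto
  next
    case 3
    define s' where "s' = s(Suc m := t (Suc n))"
    have "pvar_sum p f (Suc n) t \<le> pvar_sum p f (Suc m) s'"
      using IH(5,7) sum_t by (simp add: s'_def pvar_sum_Suc pvar_sum_upd_beyond d_def)
    moreover have "\<forall>j<Suc m. s' j < s' (Suc j)"
      using IH(3,4) tn by (auto simp: s'_def less_Suc_eq)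
    moreover have "alternating f (Suc m) s'"
      using alternating_extend[of f m s "t (Suc n)"] IH(5,6) 3
      by (simp add: s'_def d_def)
    moreover have "s' 0 = t 0" "s' (Suc m) = t (Suc n)" using IH(2) by (simp_all add: s'_def)
    ultimately show ?thesis using IH(1) by (intro exI[of _ "Suc m"] exI[of _ s']) auto
  qed
qed

lemma alternating_tracking_chain:
  fixes z x :: "real \<Rightarrow> real" and s :: "nat \<Rightarrow> real"
  assumes p: "p \<ge> 0" and e: "\<epsilon> \<ge> 0" and alt: "alternating z m s"
    and start: "z (s 0) = x (s 0)"
    and up: "\<And>j. j < m \<Longrightarrow> z (s j) < z (s (Suc j)) \<Longrightarrow>
      \<exists>u. s j < u \<and> u \<le> s (Suc j) \<and> z (s (Suc j)) \<le> x u + \<epsilon>"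
    and down: "\<And>j. j < m \<Longrightarrow> z (s (Suc j)) < z (s j) \<Longrightarrow>
      \<exists>u. s j < u \<and> u \<le> s (Suc j) \<and> x u - \<epsilon> \<le> z (s (Suc j))"
  shows "\<exists>u. u 0 = s 0 \<and> (\<forall>j<m. u j < u (Suc j)) \<and> u m \<le> s m \<and>
    pvar_sum p z m s \<le> (\<Sum>j<m. (\<bar>x (u (Suc j)) - x (u j)\<bar> + 2 * \<epsilon>) powr p)"
proof -
  define tracks where "tracks j v \<longleftrightarrow> s j < v \<and> v \<le> s (Suc j) \<and>
    (if z (s j) < z (s (Suc j)) then z (s (Suc j)) \<le> x v + \<epsilon> else x v - \<epsilon> \<le> z (s (Suc j)))"
    for j v
  have "\<exists>v. tracks j v" if "j < m" for j
    using up[OF that] down[OF that] alt that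
    by (cases "z (s j) < z (s (Suc j))") (auto simp: tracks_def alternating_def)
  then have tracks_SOME: "tracks j (SOME v. tracks j v)" if "j < m" for j
    using someI_ex that by metis
  define u where "u j = (if j = 0 then s 0 else SOME v. tracks (j - 1) v)" for j
  have u0: "u 0 = s 0" by (simp add: u_def)
  have u_tracks: "tracks j (u (Suc j))" if "j < m" for j
    using tracks_SOME[OF that] by (simp add: u_def)
  have u_le: "u j \<le> s j" if "j \<le> m" for j
    using u_tracks[of "j - 1"] that u0 by (cases j) (auto simp: tracks_def)
  have u_mono: "u j < u (Suc j)" if "j < m" for j
    using u_tracks[OF that] u_le[of j] that by (simp add: tracks_def)
  \<comment> \<open>At a turning point the preceding step went the other way, so the point chosen
    for it bounds \<open>z (s j)\<close> from the side needed by the next step.\<close>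
  have below: "x (u j) - \<epsilon> \<le> z (s j)" if "j < m" "z (s j) < z (s (Suc j))" for j
  proof (cases j)
    case (Suc i)
    then have "\<not> z (s i) < z (s j)"
      using alt that unfolding alternating_def by (auto simp: mult_less_0_iff)
    then show ?thesis using u_tracks[of i] Suc that by (simp add: tracks_def)
  qed (use start e u0 in simp)
  have above: "z (s j) \<le> x (u j) + \<epsilon>" if "j < m" "z (s (Suc j)) < z (s j)" for j
  proof (cases j)
    case (Suc i)
    then have "z (s i) < z (s j)"
      using alt that unfolding alternating_def by (auto simp: mult_less_0_iff)
    then show ?thesis using u_tracks[of i] Suc that by (simp add: tracks_def)
  qed (use start e u0 in simp)
  have "\<bar>z (s (Suc j)) - z (s j)\<bar> powr p \<le> (\<bar>x (u (Suc j)) - x (u j)\<bar> + 2 * \<epsilon>) powr p"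
    if "j < m" for j
  proof (intro powr_mono2)
    show "\<bar>z (s (Suc j)) - z (s j)\<bar> \<le> \<bar>x (u (Suc j)) - x (u j)\<bar> + 2 * \<epsilon>"
      using u_tracks[OF that] below[OF that] above[OF that] alt that e
      unfolding alternating_def by (cases "z (s j) < z (s (Suc j))") (auto simp: tracks_def abs_if)
  qed (use p in auto)
  then have "pvar_sum p z m s \<le> (\<Sum>j<m. (\<bar>x (u (Suc j)) - x (u j)\<bar> + 2 * \<epsilon>) powr p)"
    unfolding pvar_sum_def by (intro sum_mono) auto
  then show ?thesis using u0 u_mono u_le[of m] by (intro exI[of _ u]) auto
qed

lemma sum_powr_add_le_uniform:
  fixes p v \<eta> :: real
  assumes p: "p \<ge> 1" and \<eta>: "\<eta> > 0"
  shows "\<exists>\<delta>>0. \<forall>m a. (\<forall>j<m. 0 \<le> a j) \<longrightarrow> (\<Sum>j<m. a j powr p) \<le> v \<longrightarrow>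
    (\<Sum>j<m. (a j + \<delta>) powr p) \<le> (\<Sum>j<m. a j powr p) + real m * \<eta>"
proof -
  define B where "B = max 1 v"
  have "continuous_on {0..B + 1} (\<lambda>x::real. x powr p)"
    using p by (intro continuous_on_powr') (auto intro: continuous_intros)
  then have "uniformly_continuous_on {0..B + 1} (\<lambda>x::real. x powr p)"
    by (intro compact_uniformly_continuous) auto
  then obtain d where d: "d > 0" "\<And>x x'. x \<in> {0..B + 1} \<Longrightarrow> x' \<in> {0..B + 1} \<Longrightarrow>
      dist x' x < d \<Longrightarrow> dist (x' powr p) (x powr p) < \<eta>"
    unfolding uniformly_continuous_on_def using \<eta> by metis
  define \<delta> where "\<delta> = min (d / 2) 1"
  have \<delta>: "0 < \<delta>" "\<delta> \<le> 1" "\<delta> < d" using d(1) by (auto simp: \<delta>_def)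
  have "(\<Sum>j<m. (a j + \<delta>) powr p) \<le> (\<Sum>j<m. a j powr p) + real m * \<eta>"
    if a: "\<forall>j<m. 0 \<le> a j" and sum_a: "(\<Sum>j<m. a j powr p) \<le> v" for m a
  proof -
    have aB: "a j \<le> B" if "j < m" for j
    proof (cases "a j \<le> 1")
      case False
      then have "a j = a j powr 1" by simp
      also have "\<dots> \<le> a j powr p" using False p by (intro powr_mono) auto
      also have "\<dots> \<le> (\<Sum>j<m. a j powr p)" using that by (intro member_le_sum) auto
      finally show ?thesis using sum_a by (simp add: B_def)
    qed (simp add: B_def)
    have "(a j + \<delta>) powr p \<le> a j powr p + \<eta>" if "j < m" for j
    proof -
      have "dist ((a j + \<delta>) powr p) (a j powr p) < \<eta>"
        using \<delta> a aB[OF that] that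
        by (intro d(2)) (auto simp: dist_real_def)
      then show ?thesis by (simp add: dist_real_def abs_less_iff)
    qed
    then have "(\<Sum>j<m. (a j + \<delta>) powr p) \<le> (\<Sum>j<m. a j powr p + \<eta>)"
      by (intro sum_mono) auto
    then show ?thesis by (simp add: sum.distrib)
  qed
  with \<delta>(1) show ?thesis by blast
qed

lemma increasing_chain_le:
  fixes s :: "nat \<Rightarrow> 'a::order"
  assumes "\<forall>j<m. s j < s (Suc j)" "i \<le> j" "j \<le> m"
  shows "s i \<le> s j"
  by (rule lift_Suc_mono_le_ivl[of "{..<m}"]) (use assms in \<open>auto simp: less_imp_le\<close>)

lemma pvar_sum_le_of_tracking:
  fixes z x :: "real \<Rightarrow> real" and t :: "nat \<Rightarrow> real"
  assumes p: "p \<ge> 1" and start: "z 0 = x 0"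
    and up: "\<And>a b \<epsilon>. 0 \<le> a \<Longrightarrow> a < b \<Longrightarrow> b \<le> T \<Longrightarrow> z a < z b \<Longrightarrow> \<epsilon> > 0 \<Longrightarrow>
      \<exists>u. a < u \<and> u \<le> b \<and> z b \<le> x u + \<epsilon>"
    and down: "\<And>a b \<epsilon>. 0 \<le> a \<Longrightarrow> a < b \<Longrightarrow> b \<le> T \<Longrightarrow> z b < z a \<Longrightarrow> \<epsilon> > 0 \<Longrightarrow>
      \<exists>u. a < u \<and> u \<le> b \<and> x u - \<epsilon> \<le> z b"
    and t: "t 0 = 0" "\<forall>i<n. t i < t (Suc i)" "t n \<le> T"
    and v: "pvar p x 0 T = ereal v" and \<eta>: "\<eta> > 0"
  shows "pvar_sum p z n t \<le> v + \<eta>"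
proof -
  obtain \<delta> where \<delta>: "\<delta> > 0" "\<And>m a. \<forall>j<m. 0 \<le> a j \<Longrightarrow> (\<Sum>j<m. a j powr p) \<le> v \<Longrightarrow>
      (\<Sum>j<m. (a j + \<delta>) powr p) \<le> (\<Sum>j<m. a j powr p) + real m * (\<eta> / (n + 1))"
    using sum_powr_add_le_uniform[OF p, of "\<eta> / (n + 1)" v] \<eta> by auto
  obtain m s where s: "m \<le> n" "s 0 = 0" "\<forall>j<m. s j < s (Suc j)" "s m \<le> T"
      "z (s m) = z (t n)" "alternating z m s" "pvar_sum p z n t \<le> pvar_sum p z m s"
    using alternating_subchain[OF p t(2), of z] t(1,3) by auto
  have s_range: "0 \<le> s j" "s (Suc j) \<le> T" if "j < m" for j
    using increasing_chain_le[OF s(3), of 0 j] increasing_chain_le[OF s(3), of "Suc j" m]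
      s(2,4) that by auto
  obtain u where u: "u 0 = 0" "\<forall>j<m. u j < u (Suc j)" "u m \<le> s m"
      "pvar_sum p z m s \<le> (\<Sum>j<m. (\<bar>x (u (Suc j)) - x (u j)\<bar> + 2 * (\<delta> / 2)) powr p)"
    using alternating_tracking_chain[OF _ _ s(6), where p = p and x = x and \<epsilon> = "\<delta> / 2"] p
      up down s_range s(2,3) start \<delta>(1)
    by auto
  have "ereal (pvar_sum p x m u) \<le> pvar p x 0 T"
    using u s(4) by (intro pvar_sum_le_pvar) auto
  then have sum_x: "(\<Sum>j<m. \<bar>x (u (Suc j)) - x (u j)\<bar> powr p) \<le> v"
    using v by (simp add: pvar_sum_def)
  have "real m * (\<eta> / (n + 1)) \<le> (real n + 1) * (\<eta> / (n + 1))"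
    using s(1) \<eta> by (intro mult_right_mono) auto
  also have "\<dots> = \<eta>" by (simp add: add.commute)
  finally have "real m * (\<eta> / (n + 1)) \<le> \<eta>" .
  then show ?thesis
    using s(7) u(4) \<delta>(2)[OF _ sum_x] sum_x by auto
qed

lemma pvar_le_pvar_of_tracking:
  fixes z x :: "real \<Rightarrow> real"
  assumes p: "p \<ge> 1" and start: "z 0 = x 0"
    and up: "\<And>a b \<epsilon>. 0 \<le> a \<Longrightarrow> a < b \<Longrightarrow> b \<le> T \<Longrightarrow> z a < z b \<Longrightarrow> \<epsilon> > 0 \<Longrightarrow>
      \<exists>u. a < u \<and> u \<le> b \<and> z b \<le> x u + \<epsilon>"
    and down: "\<And>a b \<epsilon>. 0 \<le> a \<Longrightarrow> a < b \<Longrightarrow> b \<le> T \<Longrightarrow> z b < z a \<Longrightarrow> \<epsilon> > 0 \<Longrightarrow>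
      \<exists>u. a < u \<and> u \<le> b \<and> x u - \<epsilon> \<le> z b"
  shows "pvar p z 0 T \<le> pvar p x 0 T"
  unfolding pvar_eq_SUP_pvar_sum[of p z]
proof (rule SUP_least, clarify)
  fix n t assume "(n, t) \<in> subdivisions 0 T"
  then have t: "t 0 = 0" "\<forall>i<n. t i < t (Suc i)" "t n \<le> T"
    by (auto simp: subdivisions_def)
  have "ereal 0 \<le> ereal (pvar_sum p x n t)" by (simp add: pvar_sum_nonneg)
  also have "\<dots> \<le> pvar p x 0 T" by (rule pvar_sum_le_pvar[OF t])
  finally have "ereal 0 \<le> pvar p x 0 T" .
  then show "ereal (pvar_sum p z n t) \<le> pvar p x 0 T"
  proof (cases "pvar p x 0 T")
    case (real v)
    have "pvar_sum p z n t \<le> v"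
      by (rule field_le_epsilon, rule pvar_sum_le_of_tracking[OF p start up down t real])
    then show ?thesis using real by simp
  qed auto
qed

lemma compact_bdd_above_if_locally_bdd_above:
  fixes f :: "'a::metric_space \<Rightarrow> real"
  assumes "compact K" and local: "\<And>t. t \<in> K \<Longrightarrow> \<exists>d>0. \<exists>B. \<forall>s\<in>K. dist s t < d \<longrightarrow> f s \<le> B"
  shows "bdd_above (f ` K)"
proof -
  obtain d B where dB: "\<And>t. t \<in> K \<Longrightarrow> d t > 0 \<and> (\<forall>s\<in>K. dist s t < d t \<longrightarrow> f s \<le> B t)"
    using local by metis
  obtain D where D: "D \<subseteq> K" "finite D" "K \<subseteq> (\<Union>t\<in>D. ball t (d t))"
    using assms(1) by (rule compactE_image[of K K "\<lambda>t. ball t (d t)"]) (use dB in auto)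
  show ?thesis
  proof (rule bdd_aboveI2)
    fix s assume "s \<in> K"
    then obtain t where t: "t \<in> D" "s \<in> ball t (d t)" using D by auto
    then have "f s \<le> B t" using dB[of t] D \<open>s \<in> K\<close> by (auto simp: dist_commute)
    also have "B t \<le> Max (B ` D)" using t D by auto
    finally show "f s \<le> Max (B ` D)" .
  qed
qed

lemma cadlag_locally_bdd_above:
  assumes y: "cadlag y" and "t \<ge> 0"
  shows "\<exists>d>0. \<exists>B. \<forall>s\<ge>0. dist s t < d \<longrightarrow> y s \<le> B"
proof -
  have "(y \<longlongrightarrow> y t) (at_right t)"
    using assms by (simp add: cadlag_def continuous_within)
  then have right: "eventually (\<lambda>s. y s \<le> y t + 1) (at_right t)"
    by (rule eventually_mono[OF tendstoD[OF _ zero_less_one]]) (auto simp: dist_real_def)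
  obtain l where left: "eventually (\<lambda>s. 0 \<le> s \<longrightarrow> y s \<le> l) (at_left t)"
  proof (cases "t = 0")
    case True
    have "eventually (\<lambda>s. s \<in> {-1<..<t}) (at_left t)"
      using True by (intro eventually_at_left_real) simp
    then show ?thesis
      using True by (intro that[of 0]) (auto elim: eventually_mono)
  next
    case False
    with \<open>t \<ge> 0\<close> have "t > 0" by simp
    then obtain l where "(y \<longlongrightarrow> l) (at_left t)"
      using y by (auto simp: cadlag_def)
    then have "eventually (\<lambda>s. y s \<le> l + 1) (at_left t)"
      by (rule eventually_mono[OF tendstoD[OF _ zero_less_one]]) (auto simp: dist_real_def)
    then show ?thesis by (intro that[of "l + 1"]) (auto elim: eventually_mono)
  qed
  have "eventually (\<lambda>s. 0 \<le> s \<longrightarrow> y s \<le> max l (y t + 1)) (at t)"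
    unfolding eventually_at_split using left right by (auto elim: eventually_mono)
  then obtain d where d: "d > 0"
    "\<And>s. s \<noteq> t \<Longrightarrow> dist s t < d \<Longrightarrow> 0 \<le> s \<longrightarrow> y s \<le> max l (y t + 1)"
    by (auto simp: eventually_at)
  have "y s \<le> max l (y t + 1)" if "0 \<le> s" "dist s t < d" for s
    using d(2)[of s] that by (cases "s = t") auto
  then show ?thesis using d(1) by blast
qed

lemma cadlag_bdd_above:
  assumes "cadlag y"
  shows "bdd_above (y ` {0..T})"
proof (rule compact_bdd_above_if_locally_bdd_above)
  fix t :: real assume "t \<in> {0..T}"
  then obtain d B where "d > 0" "\<forall>s\<ge>0. dist s t < d \<longrightarrow> y s \<le> B"
    using cadlag_locally_bdd_above[OF assms, of t] by auto
  then show "\<exists>d>0. \<exists>B. \<forall>s\<in>{0..T}. dist s t < d \<longrightarrow> y s \<le> B"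
    by (intro exI[of _ d] conjI exI[of _ B]) auto
qed (rule compact_Icc)

lemma runsup_mono:
  assumes "bdd_above (y ` {0..b})" "0 \<le> a" "a \<le> b"
  shows "runsup y a \<le> runsup y b"
  unfolding runsup_def using assms by (intro cSup_subset_mono) auto

lemma le_runsup:
  assumes "bdd_above (y ` {0..b})" "0 \<le> s" "s \<le> b"
  shows "y s \<le> runsup y b"
  unfolding runsup_def using assms by (intro cSup_upper) auto

lemma runsup_nearly_attained:
  assumes "bdd_above (y ` {0..b})" "0 \<le> b" "e > 0"
  shows "\<exists>u. 0 \<le> u \<and> u \<le> b \<and> runsup y b - e < y u"
proof -
  have "runsup y b - e < Sup (y ` {0..b})" using assms(3) by (simp add: runsup_def)
  then show ?thesis using less_cSup_iff[of "y ` {0..b}"] assms(1,2) by auto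
qed

lemma runsup_diff_increase_witness:
  assumes bdd1: "bdd_above (y1 ` {0..b})" and bdd2: "bdd_above (y2 ` {0..b})"
    and ab: "0 \<le> a" "a \<le> b" and e: "e > 0"
    and incr: "runsup y1 a - runsup y2 a < runsup y1 b - runsup y2 b"
  shows "\<exists>u. a < u \<and> u \<le> b \<and> runsup y1 b - runsup y2 b \<le> y1 u - y2 u + e"
proof -
  have "runsup y2 a \<le> runsup y2 b" using runsup_mono[OF bdd2 ab] .
  then have gap: "runsup y1 a < runsup y1 b" using incr by linarith
  obtain u where u: "0 \<le> u" "u \<le> b" "runsup y1 b - min e (runsup y1 b - runsup y1 a) < y1 u"
    using runsup_nearly_attained[OF bdd1, of "min e (runsup y1 b - runsup y1 a)"] ab e gap by auto
  have "a < u"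
  proof (rule ccontr)
    assume "\<not> a < u"
    moreover have "bdd_above (y1 ` {0..a})"
      using bdd1 by (rule bdd_above_mono) (use ab in auto)
    ultimately have "y1 u \<le> runsup y1 a" using le_runsup u(1) by simp
    then show False using u(3) by linarith
  qed
  moreover have "y2 u \<le> runsup y2 b" using le_runsup[OF bdd2 u(1,2)] .
  ultimately show ?thesis using u by (intro exI[of _ u]) auto
qed

theorem theorem1:
  fixes p T :: real and y1 y2 :: "real \<Rightarrow> real"
  assumes "p \<ge> 1" and "cadlag y1" and "cadlag y2" and "T \<ge> 0"
  shows "pvar p (\<lambda>t. runsup y1 t - runsup y2 t) 0 T \<le> pvar p (\<lambda>t. y1 t - y2 t) 0 T"
proof (rule pvar_le_pvar_of_tracking[OF \<open>p \<ge> 1\<close>])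
  have bdd1: "bdd_above (y1 ` {0..b})" and bdd2: "bdd_above (y2 ` {0..b})" for b
    using assms(2,3) by (simp_all add: cadlag_bdd_above)
  show "runsup y1 0 - runsup y2 0 = y1 0 - y2 0" by (simp add: runsup_def)
  show "\<exists>u. a < u \<and> u \<le> b \<and> runsup y1 b - runsup y2 b \<le> y1 u - y2 u + \<epsilon>"
    if "0 \<le> a" "a < b" "runsup y1 a - runsup y2 a < runsup y1 b - runsup y2 b" "\<epsilon> > 0"
    for a b \<epsilon>
    using runsup_diff_increase_witness[OF bdd1 bdd2] that by simp
  show "\<exists>u. a < u \<and> u \<le> b \<and> y1 u - y2 u - \<epsilon> \<le> runsup y1 b - runsup y2 b"
    if decr: "0 \<le> a" "a < b" "runsup y1 b - runsup y2 b < runsup y1 a - runsup y2 a" "\<epsilon> > 0"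
    for a b \<epsilon>
  proof -
    obtain u where "a < u" "u \<le> b" "runsup y2 b - runsup y1 b \<le> y2 u - y1 u + \<epsilon>"
      using runsup_diff_increase_witness[OF bdd2 bdd1, where a = a and b = b and e = \<epsilon>] decr
      by auto
    then show ?thesis by (intro exI[of _ u]) auto
  qed
qed

end
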